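(* Consider the constrained online prediction problem and the \texttt{BanditQ} policy described in the context, with horizon $T$ and constant parameter $V_t=V=\Theta(\sqrt{T})$. For each $T$ let $\mathcal{I}=\mathcal{I}_T\subseteq[T]$ be an interval of consecutive rounds such that $T^{3/4}=o(|\mathcal{I}|)$ as $T\to\infty$. Then for every $i\in\mathcal{P}$, \[\liminf_{|\mathcal{I}|\to\infty}\ \frac{1}{|\mathcal{I}|}\sum_{t\in\mathcal{I}} r_i(t)\,x_i(t)\ \ge\ \lambda_i .\]
   Context: There are $N$ users. On each round $t=1,2,\dots$ an online policy chooses a probability vector $\bm{x}(t)=(x_1(t),\dots,x_N(t))$ in the standard simplex $\Delta_N=\{\bm{x}\in\mathbb{R}^N_{\ge 0}:\sum_i x_i=1\}$; afterwards an adversarially chosen reward vector $\bm{r}(t)=(r_1(t),\dots,r_N(t))\in[0,1]^N$ is revealed (full information), and the policy may use all past reward vectors to choose $\bm{x}(t+1)$. A subset $\mathcal{P}\subseteq[N]$ of protected users is given, with target rates $\lambda_i\in[0,1]$, $i\in\mathcal{P}$, satisfying $\sum_{i\in\mathcal{P}}\lambda_i\le 1$; set $\lambda_i=0$ for $i\notin\mathcal{P}$. The feasible set of stationary actions is $\Omega=\{\bm{x}^*\in\Delta_N : r_i(t)x^*_i\ge\lambda_i \text{ for all } i\in\mathcal{P} \text{ and all rounds } t\}$, which is assumed nonempty. The \texttt{BanditQ} policy: for each $i\in\mathcal{P}$ maintain $Q_i(0)=0$ and $Q_i(t)=\max\big(0,\,Q_i(t-1)+\lambda_i-r_i(t)x_i(t)\big)$;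 for $i\notin\mathcal{P}$ set $Q_i(t)=0$ for all $t$. Given a non-negative parameter sequence $(V_t)_{t\ge1}$, define surrogate rewards $r'_i(t)=(Q_i(t-1)+V_t)\,r_i(t)$ for all $i\in[N]$. Starting from an arbitrary $\bm{x}(1)\in\Delta_N$, the policy updates by adaptive online gradient ascent: $\bm{x}(t+1)=\Pi_{\Delta_N}\Big(\bm{x}(t)+\bm{r}'(t)\big/\sqrt{2\sum_{\tau=1}^{t}\|\bm{r}'(\tau)\|_2^2}\Big)$, where $\Pi_{\Delta_N}$ denotes Euclidean projection onto $\Delta_N$. *)

theory Defs
  imports "HOL-Analysis.Analysis" "HOL-Library.Landau_Symbols"
begin

text \<open>Users are indexed by a finite type 'n; vectors in R^N are real^'n.\<close>

definition prob_simplex :: "(real^'n::finite) set" where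
  "prob_simplex = {x. (\<forall>i. 0 \<le> x$i) \<and> (\<Sum>i\<in>UNIV. x$i) = 1}"

text \<open>State of BanditQ after k updates: (x(k+1), Q(k), S(k)) where
  S(k) = sum over tau=1..k of the squared norm of r'(tau).
  r t is the reward vector revealed at round t (t >= 1); V is the constant parameter.\<close>

fun bq_state :: "(nat \<Rightarrow> real^'n::finite) \<Rightarrow> 'n set \<Rightarrow> ('n \<Rightarrow> real) \<Rightarrow> real
                 \<Rightarrow> real^'n \<Rightarrow> nat \<Rightarrow> (real^'n) \<times> (real^'n) \<times> real" where
  "bq_state r P lam V x1 0 = (x1, 0, 0)"
| "bq_state r P lam V x1 (Suc k) =
     (case bq_state r P lam V x1 k of (x, Q, S) \<Rightarrow>
        let t = Suc k;
            r' = (\<chi> i. (Q$i + V) * (r t)$i);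
            S' = S + (norm r')\<^sup>2;
            x' = closest_point prob_simplex (x + (1 / sqrt (2 * S')) *\<^sub>R r');
            Q' = (\<chi> i. if i \<in> P then max 0 (Q$i + lam i - (r t)$i * x$i) else 0)
        in (x', Q', S'))"

definition bq_x :: "(nat \<Rightarrow> real^'n::finite) \<Rightarrow> 'n set \<Rightarrow> ('n \<Rightarrow> real) \<Rightarrow> real
                 \<Rightarrow> real^'n \<Rightarrow> nat \<Rightarrow> real^'n" where
  "bq_x r P lam V x1 t = fst (bq_state r P lam V x1 (t - 1))"

end

(*
  By the queue recursion, the reward of a protected user i over a window {a..b} of rounds is at
  least card {a..b} * lam i - Q_i(b), so it suffices to bound all queues up to round T by
  O(T^(3/4)). The Lyapunov drift of the squared queue norm is at most 2 r'(t).(x* - x(t)) + 2V + N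
  for any feasible stationary x*, and the adaptive projected gradient ascent has regret
  O(sqrt(S_T)) where S_T is the sum of squared surrogate norms. Hence ||Q(T)||^2 <= 3 sqrt(2 S_T) +
  T(2V + N), while S_T <= T N (M + V)^2 for the largest queue entry M up to T. This quadratic
  inequality in M gives M = O(sqrt T + sqrt(T V)) = O(T^(3/4)) for V = O(sqrt T).
*)

theory Submission
  imports Defs "HOL-Real_Asymp.Real_Asymp"
begin

lemma prob_simplex_nonneg: "x \<in> prob_simplex \<Longrightarrow> 0 \<le> x $ j"
  by (simp add: prob_simplex_def)

lemma prob_simplex_sum: "x \<in> prob_simplex \<Longrightarrow> (\<Sum>j\<in>UNIV. x $ j) = 1"
  by (simp add: prob_simplex_def)

lemma prob_simplex_le_1:
  assumes "x \<in> prob_simplex" shows "x $ j \<le> 1"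
proof -
  have "x $ j \<le> (\<Sum>j\<in>UNIV. x $ j)"
    by (rule member_le_sum) (simp_all add: prob_simplex_nonneg[OF assms])
  then show ?thesis by (simp add: prob_simplex_sum[OF assms])
qed

lemma convex_prob_simplex: "convex prob_simplex"
  unfolding convex_def prob_simplex_def
  by (auto simp: sum.distrib sum_distrib_left[symmetric])

lemma closed_prob_simplex: "closed (prob_simplex :: (real^'n::finite) set)"
proof -
  have "prob_simplex = (\<Inter>j. {x::real^'n. 0 \<le> x $ j}) \<inter> {x. (\<Sum>j\<in>UNIV. x $ j) = 1}"
    unfolding prob_simplex_def by auto
  moreover have "closed {x::real^'n. 0 \<le> x $ j}" for j
    by (intro closed_Collect_le continuous_intros)
  moreover have "closed {x::real^'n. (\<Sum>j\<in>UNIV. x $ j) = 1}"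
    by (intro closed_Collect_eq continuous_intros)
  ultimately show ?thesis by (metis closed_INT closed_Int)
qed

lemma norm_diff_prob_simplex_sq_le:
  assumes x: "x \<in> prob_simplex" and y: "y \<in> prob_simplex"
  shows "(norm (x - y))\<^sup>2 \<le> 2"
proof -
  have "(norm (x - y))\<^sup>2 = (\<Sum>j\<in>UNIV. (x$j - y$j)\<^sup>2)"
    by (simp add: norm_vec_def L2_set_def sum_nonneg)
  also have "\<dots> \<le> (\<Sum>j\<in>UNIV. x$j + y$j)"
  proof (rule sum_mono)
    fix j
    have "0 \<le> x$j" "x$j \<le> 1" "0 \<le> y$j" "y$j \<le> 1"
      using x y by (simp_all add: prob_simplex_nonneg prob_simplex_le_1)
    then show "(x$j - y$j)\<^sup>2 \<le> x$j + y$j"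
      by (smt (verit) mult_left_le power2_diff power2_eq_square zero_le_mult_iff)
  qed
  also have "\<dots> = 2" using x y by (simp add: sum.distrib prob_simplex_sum)
  finally show ?thesis .
qed

lemma projected_step_progress:
  fixes g x u :: "'a::{real_inner,heine_borel}"
  assumes "convex K" "closed K" "u \<in> K"
  shows "2 * \<eta> * (g \<bullet> (u - x))
    \<le> (norm (x - u))\<^sup>2 - (norm (closest_point K (x + \<eta> *\<^sub>R g) - u))\<^sup>2 + \<eta>\<^sup>2 * (norm g)\<^sup>2"
proof -
  have "norm (closest_point K (x + \<eta> *\<^sub>R g) - u) \<le> norm ((x - u) + \<eta> *\<^sub>R g)"
    using closest_point_lipschitz[OF assms(1,2), of "x + \<eta> *\<^sub>R g" u] closest_point_self[OF assms(3)]
      assms(3) by (auto simp: dist_norm algebra_simps)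
  then have "(norm (closest_point K (x + \<eta> *\<^sub>R g) - u))\<^sup>2 \<le> (norm ((x - u) + \<eta> *\<^sub>R g))\<^sup>2"
    by (simp add: power_mono)
  also have "\<dots> = (norm (x - u))\<^sup>2 - 2 * \<eta> * (g \<bullet> (u - x)) + \<eta>\<^sup>2 * (norm g)\<^sup>2"
    unfolding power2_norm_eq_inner
    by (simp add: inner_add_left inner_add_right inner_diff_right inner_commute
        algebra_simps power2_eq_square)
  finally show ?thesis by simp
qed

lemma sum_div_sqrt_partial_sums_le:
  fixes a :: "nat \<Rightarrow> real"
  assumes "\<And>k. 0 \<le> a k"
  shows "(\<Sum>k<n. a k / sqrt (\<Sum>i\<le>k. a i)) \<le> 2 * sqrt (\<Sum>k<n. a k)"
proof (induction n)
  case 0 then show ?case by simp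
next
  case (Suc n)
  define s where "s = (\<Sum>k<n. a k)"
  have s: "0 \<le> s" "(\<Sum>i\<le>n. a i) = s + a n" "(\<Sum>k<Suc n. a k) = s + a n"
    using assms by (simp_all add: s_def sum_nonneg lessThan_Suc_atMost[symmetric])
  have "a n / sqrt (s + a n) \<le> 2 * (sqrt (s + a n) - sqrt s)"
  proof (cases "s + a n = 0")
    case False
    then have pos: "0 < sqrt (s + a n)" using s assms[of n] by simp
    have "a n = (sqrt (s + a n) - sqrt s) * (sqrt (s + a n) + sqrt s)"
      using s assms[of n] by (simp add: algebra_simps)
    also have "\<dots> \<le> (sqrt (s + a n) - sqrt s) * (2 * sqrt (s + a n))"
      using s assms[of n] by (intro mult_left_mono) auto
    finally have "a n \<le> 2 * (sqrt (s + a n) - sqrt s) * sqrt (s + a n)"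
      by (simp add: algebra_simps)
    then show ?thesis unfolding pos_divide_le_eq[OF pos] .
  qed (use s assms[of n] in auto)
  then show ?case using Suc.IH by (simp add: s s_def[symmetric])
qed

lemma weighted_telescoping_le:
  fixes w D :: "nat \<Rightarrow> real"
  assumes "incseq w" "0 \<le> w 0" "\<And>k. 0 \<le> D k" "\<And>k. D k \<le> d"
  shows "(\<Sum>k<n. w (Suc k) * (D k - D (Suc k))) \<le> w n * d"
proof -
  have "(\<Sum>k<n. w (Suc k) * (D k - D (Suc k))) \<le> w n * (d - D n)" for n
  proof (induction n)
    case 0 then show ?case using assms by simp
  next
    case (Suc n)
    have "w n * (d - D n) \<le> w (Suc n) * (d - D n)"
      using assms by (intro mult_right_mono) (auto simp: incseq_SucD)
    then show ?case using Suc.IH by (simp add: algebra_simps)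
  qed
  moreover have "0 \<le> w n" using assms(1,2) by (metis incseq_def le0 order_trans)
  ultimately show ?thesis
    using assms(3)[of n] by (smt (verit) mult_left_mono)
qed

lemma adaptive_projected_gradient_regret:
  fixes g x :: "nat \<Rightarrow> 'a::{real_inner,heine_borel}"
  assumes K: "convex K" "closed K" "u \<in> K" "x 0 \<in> K"
    and diam: "\<And>y z. y \<in> K \<Longrightarrow> z \<in> K \<Longrightarrow> (norm (y - z))\<^sup>2 \<le> d"
    and step: "\<And>k. x (Suc k) =
      closest_point K (x k + (1 / sqrt (2 * (\<Sum>i\<le>k. (norm (g i))\<^sup>2))) *\<^sub>R g k)"
  shows "(\<Sum>k<n. g k \<bullet> (u - x k)) \<le> (d + 1) / 2 * sqrt (2 * (\<Sum>k<n. (norm (g k))\<^sup>2))"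
proof -
  define w where "w m = sqrt (2 * (\<Sum>k<m. (norm (g k))\<^sup>2))" for m
  define D where "D k = (norm (x k - u))\<^sup>2" for k
  have w_Suc: "w (Suc k) = sqrt (2 * (\<Sum>i\<le>k. (norm (g i))\<^sup>2))" for k
    by (simp add: w_def lessThan_Suc_atMost)
  have x_in: "x k \<in> K" for k
    using K by (induction k) (auto simp: step intro: closest_point_in_set)
  have per_step: "g k \<bullet> (u - x k)
      \<le> w (Suc k) / 2 * (D k - D (Suc k)) + (norm (g k))\<^sup>2 / (2 * w (Suc k))" for k
  proof (cases "w (Suc k) = 0")
    case True
    then have "(\<Sum>i\<le>k. (norm (g i))\<^sup>2) = 0" by (simp add: w_Suc)
    then have "g k = 0" by (simp add: sum_nonneg_eq_0_iff)
    then show ?thesis using True by simp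
  next
    case False
    have "0 \<le> w (Suc k)" by (simp add: w_def sum_nonneg)
    with False have pos: "0 < w (Suc k)" by simp
    have "2 * (1 / w (Suc k)) * (g k \<bullet> (u - x k))
        \<le> D k - D (Suc k) + (1 / w (Suc k))\<^sup>2 * (norm (g k))\<^sup>2"
      using projected_step_progress[OF K(1-3), of "1 / w (Suc k)" "g k" "x k"]
      by (simp add: D_def step w_Suc)
    then show ?thesis using pos by (simp add: field_simps power2_eq_square)
  qed
  have "(\<Sum>k<n. g k \<bullet> (u - x k))
      \<le> (\<Sum>k<n. w (Suc k) / 2 * (D k - D (Suc k))) + (\<Sum>k<n. (norm (g k))\<^sup>2 / (2 * w (Suc k)))"
    unfolding sum.distrib[symmetric] by (intro sum_mono per_step)
  also have "\<dots> \<le> w n / 2 * d + w n / 2"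
  proof (rule add_mono)
    show "(\<Sum>k<n. w (Suc k) / 2 * (D k - D (Suc k))) \<le> w n / 2 * d"
      using weighted_telescoping_le[of "\<lambda>m. w m / 2" D d n] diam[OF x_in K(3)]
      by (simp add: incseq_SucI w_def D_def)
    have "(\<Sum>k<n. 2 * (norm (g k))\<^sup>2 / sqrt (\<Sum>i\<le>k. 2 * (norm (g i))\<^sup>2))
        \<le> 2 * sqrt (\<Sum>k<n. 2 * (norm (g k))\<^sup>2)"
      by (rule sum_div_sqrt_partial_sums_le) simp
    moreover have "(\<Sum>k<n. (norm (g k))\<^sup>2 / (2 * w (Suc k)))
        = (\<Sum>k<n. 2 * (norm (g k))\<^sup>2 / sqrt (\<Sum>i\<le>k. 2 * (norm (g i))\<^sup>2)) / 4"
      unfolding sum_divide_distrib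
      by (intro sum.cong) (simp_all add: w_Suc sum_distrib_left[symmetric])
    ultimately show "(\<Sum>k<n. (norm (g k))\<^sup>2 / (2 * w (Suc k))) \<le> w n / 2"
      by (simp add: w_def sum_distrib_left[symmetric])
  qed
  finally show ?thesis by (simp add: w_def algebra_simps)
qed

lemma prob_simplex_weighted_gain_ge:
  assumes "x \<in> prob_simplex" "u \<in> prob_simplex" "\<And>j. 0 \<le> c $ j \<and> c $ j \<le> 1"
  shows "-1 \<le> (\<Sum>j\<in>UNIV. c $ j * (u $ j - x $ j))"
proof -
  have "(\<Sum>j\<in>UNIV. - x $ j) \<le> (\<Sum>j\<in>UNIV. c $ j * (u $ j - x $ j))"
  proof (rule sum_mono)
    fix j
    have "0 \<le> c $ j * u $ j" "c $ j * x $ j \<le> x $ j"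
      using assms by (simp_all add: prob_simplex_nonneg mult_left_le_one_le)
    then show "- x $ j \<le> c $ j * (u $ j - x $ j)" by (simp add: algebra_simps)
  qed
  then show ?thesis using assms(1) by (simp add: sum_negf prob_simplex_sum)
qed

lemma max_0_add_sq_le:
  fixes q d c :: real
  assumes "0 \<le> q" "\<bar>d\<bar> \<le> 1" "d \<le> c"
  shows "(max 0 (q + d))\<^sup>2 \<le> q\<^sup>2 + 2 * q * c + 1"
proof -
  have "(max 0 (q + d))\<^sup>2 \<le> (q + d)\<^sup>2" by (simp add: max_def)
  also have "\<dots> = q\<^sup>2 + 2 * q * d + d\<^sup>2" by (simp add: power2_sum)
  also have "\<dots> \<le> q\<^sup>2 + 2 * q * c + 1"
    using assms by (intro add_mono) (auto simp: mult_left_mono abs_square_le_1)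
  finally show ?thesis .
qed

lemma le_add_sqrt_if_sq_le:
  fixes q A C :: real
  assumes "0 \<le> A" "0 \<le> C" "q\<^sup>2 \<le> A * (A + sqrt C) + C"
  shows "q \<le> A + sqrt C"
proof (rule power2_le_imp_le)
  have "(A + sqrt C)\<^sup>2 = A * (A + sqrt C) + C + A * sqrt C"
    using assms by (simp add: power2_sum power2_eq_square algebra_simps)
  then show "q\<^sup>2 \<le> (A + sqrt C)\<^sup>2"
    using assms mult_nonneg_nonneg[OF assms(1) real_sqrt_ge_zero[OF assms(2)]] by linarith
qed (use assms in simp)

text \<open>The positive root bound for \<open>M\<^sup>2 \<le> A (M + V) + T (2 V + N)\<close> with
  \<open>A = 3 \<surd>(2 N T)\<close>.\<close>

definition queue_bound :: "real \<Rightarrow> real \<Rightarrow> real \<Rightarrow> real" where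
  "queue_bound N V T = 3 * sqrt (2 * N * T) + sqrt (3 * sqrt (2 * N * T) * V + T * (2 * V + N))"

locale banditq =
  fixes r :: "nat \<Rightarrow> real^'n::finite" and P :: "'n set" and lam :: "'n \<Rightarrow> real"
    and V :: real and x1 :: "real^'n" and u :: "real^'n"
  assumes rewards: "\<And>t j. 1 \<le> t \<Longrightarrow> 0 \<le> r t $ j \<and> r t $ j \<le> 1"
    and lam_range: "\<And>j. j \<in> P \<Longrightarrow> 0 \<le> lam j \<and> lam j \<le> 1"
    and V_nonneg: "0 \<le> V"
    and x1_simplex: "x1 \<in> prob_simplex"
    and u_simplex: "u \<in> prob_simplex"
    and u_feasible: "\<And>j t. j \<in> P \<Longrightarrow> 1 \<le> t \<Longrightarrow> lam j \<le> r t $ j * u $ j"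
begin

text \<open>Index shift: \<open>act k\<close> is the action \<open>x(k+1)\<close> and \<open>surrogate k\<close> the surrogate reward
  \<open>r'(k+1)\<close>, whereas \<open>queue k\<close> is \<open>Q(k)\<close>.\<close>

definition act :: "nat \<Rightarrow> real^'n" where
  "act k = fst (bq_state r P lam V x1 k)"

definition queue :: "nat \<Rightarrow> real^'n" where
  "queue k = fst (snd (bq_state r P lam V x1 k))"

definition sqsum :: "nat \<Rightarrow> real" where
  "sqsum k = snd (snd (bq_state r P lam V x1 k))"

definition surrogate :: "nat \<Rightarrow> real^'n" where
  "surrogate k = (\<chi> j. (queue k $ j + V) * r (Suc k) $ j)"

lemma state_0: "act 0 = x1" "queue 0 = 0" "sqsum 0 = 0"
  by (simp_all add: act_def queue_def sqsum_def)

lemma state_Suc: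
  "sqsum (Suc k) = sqsum k + (norm (surrogate k))\<^sup>2"
  "act (Suc k) = closest_point prob_simplex (act k + (1 / sqrt (2 * sqsum (Suc k))) *\<^sub>R surrogate k)"
  "queue (Suc k) = (\<chi> j. if j \<in> P then max 0 (queue k $ j + lam j - r (Suc k) $ j * act k $ j) else 0)"
  by (simp_all add: act_def queue_def sqsum_def surrogate_def Let_def case_prod_beta cong: if_cong)

lemma sqsum_eq_sum: "sqsum k = (\<Sum>i<k. (norm (surrogate i))\<^sup>2)"
  by (induction k) (simp_all add: state_0 state_Suc)

lemma act_in_prob_simplex: "act k \<in> prob_simplex"
proof (induction k)
  case (Suc k)
  then show ?case
    unfolding state_Suc by (intro closest_point_in_set closed_prob_simplex) auto
qed (simp add: state_0 x1_simplex)

lemma queue_nonneg: "0 \<le> queue k $ j"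
  by (cases k) (simp_all add: state_0 state_Suc)

lemma queue_notin: "j \<notin> P \<Longrightarrow> queue k $ j = 0"
  by (cases k) (simp_all add: state_0 state_Suc)

lemma queue_Suc_ge:
  "j \<in> P \<Longrightarrow> queue k $ j + lam j - r (Suc k) $ j * act k $ j \<le> queue (Suc k) $ j"
  by (simp add: state_Suc)

lemma queue_drift:
  "(norm (queue (Suc k)))\<^sup>2 \<le> (norm (queue k))\<^sup>2 + 2 * (surrogate k \<bullet> (u - act k)) + 2 * V + CARD('n)"
proof -
  let ?x = "act k" and ?Q = "queue k" and ?c = "r (Suc k)"
  have c01: "0 \<le> ?c $ j \<and> ?c $ j \<le> 1" for j using rewards[of "Suc k" j] by simp
  have x01: "0 \<le> ?x $ j" "?x $ j \<le> 1" for j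
    using act_in_prob_simplex by (simp_all add: prob_simplex_nonneg prob_simplex_le_1)
  have component:
    "(queue (Suc k) $ j)\<^sup>2 \<le> (?Q $ j)\<^sup>2 + 2 * ?Q $ j * (?c $ j * (u $ j - ?x $ j)) + 1" for j
  proof (cases "j \<in> P")
    case True
    have "0 \<le> ?c $ j * ?x $ j" "?c $ j * ?x $ j \<le> 1"
      using c01[of j] x01[of j] by (auto intro: mult_le_one)
    then have "\<bar>lam j - ?c $ j * ?x $ j\<bar> \<le> 1" using lam_range[OF True] by auto
    moreover have "lam j - ?c $ j * ?x $ j \<le> ?c $ j * (u $ j - ?x $ j)"
      using u_feasible[OF True, of "Suc k"] by (simp add: algebra_simps)
    ultimately have "(max 0 (?Q $ j + (lam j - ?c $ j * ?x $ j)))\<^sup>2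
        \<le> (?Q $ j)\<^sup>2 + 2 * ?Q $ j * (?c $ j * (u $ j - ?x $ j)) + 1"
      by (rule max_0_add_sq_le[OF queue_nonneg])
    then show ?thesis using True by (simp add: state_Suc add_diff_eq)
  qed (simp add: queue_notin)
  have "(norm (queue (Suc k)))\<^sup>2
      \<le> (norm ?Q)\<^sup>2 + 2 * (\<Sum>j\<in>UNIV. ?Q $ j * (?c $ j * (u $ j - ?x $ j))) + CARD('n)"
    using sum_mono[of UNIV, OF component]
    by (simp add: norm_vec_def L2_set_def sum_nonneg sum.distrib sum_distrib_left mult.assoc)
  moreover have "surrogate k \<bullet> (u - ?x)
      = (\<Sum>j\<in>UNIV. ?Q $ j * (?c $ j * (u $ j - ?x $ j)))
        + V * (\<Sum>j\<in>UNIV. ?c $ j * (u $ j - ?x $ j))"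
    by (simp add: surrogate_def inner_vec_def sum_distrib_left sum.distrib[symmetric] algebra_simps)
  moreover have "- V \<le> V * (\<Sum>j\<in>UNIV. ?c $ j * (u $ j - ?x $ j))"
    using mult_left_mono[OF prob_simplex_weighted_gain_ge[OF act_in_prob_simplex u_simplex c01]
        V_nonneg]
    by simp
  ultimately show ?thesis by linarith
qed

lemma queue_norm_sq_le:
  "(norm (queue n))\<^sup>2 \<le> 3 * sqrt (2 * sqsum n) + n * (2 * V + CARD('n))"
proof -
  have "(norm (queue n))\<^sup>2 \<le> 2 * (\<Sum>k<n. surrogate k \<bullet> (u - act k)) + n * (2 * V + CARD('n))"
  proof (induction n)
    case (Suc n)
    then show ?case using queue_drift[of n] by (simp add: algebra_simps)
  qed (simp add: state_0)
  also have "(\<Sum>k<n. surrogate k \<bullet> (u - act k)) \<le> (2 + 1) / 2 * sqrt (2 * sqsum n)"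
    unfolding sqsum_eq_sum
  proof (rule adaptive_projected_gradient_regret
      [OF convex_prob_simplex closed_prob_simplex u_simplex])
    show "act 0 \<in> prob_simplex" by (rule act_in_prob_simplex)
    show "(norm (y - z))\<^sup>2 \<le> 2" if "y \<in> prob_simplex" "z \<in> prob_simplex" for y z :: "real^'n"
      using norm_diff_prob_simplex_sq_le[OF that] .
    show "act (Suc k) = closest_point prob_simplex
        (act k + (1 / sqrt (2 * (\<Sum>i\<le>k. (norm (surrogate i))\<^sup>2))) *\<^sub>R surrogate k)" for k
      by (simp add: state_Suc(2) sqsum_eq_sum lessThan_Suc_atMost)
  qed
  finally show ?thesis by simp
qed

lemma sqsum_le:
  assumes "\<And>k j. k < n \<Longrightarrow> queue k $ j \<le> M"
  shows "sqsum n \<le> n * (CARD('n) * (M + V)\<^sup>2)"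
proof -
  have "(norm (surrogate k))\<^sup>2 \<le> CARD('n) * (M + V)\<^sup>2" if "k < n" for k
  proof -
    have "(\<Sum>j\<in>UNIV. ((queue k $ j + V) * r (Suc k) $ j)\<^sup>2) \<le> (\<Sum>j\<in>(UNIV::'n set). (M + V)\<^sup>2)"
    proof (intro sum_mono power_mono)
      fix j
      have "0 \<le> queue k $ j + V" using queue_nonneg V_nonneg by (simp add: add_nonneg_nonneg)
      then show "0 \<le> (queue k $ j + V) * r (Suc k) $ j"
        "(queue k $ j + V) * r (Suc k) $ j \<le> M + V"
        using rewards[of "Suc k" j] assms[OF that, of j] by (auto intro: mult_left_le order_trans)
    qed
    then show ?thesis by (simp add: norm_vec_def L2_set_def sum_nonneg surrogate_def)
  qed
  then have "(\<Sum>k<n. (norm (surrogate k))\<^sup>2) \<le> (\<Sum>k<n. CARD('n) * (M + V)\<^sup>2)"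
    by (intro sum_mono) simp
  then show ?thesis by (simp add: sqsum_eq_sum)
qed

lemma queue_le_bound:
  assumes "k \<le> T"
  shows "queue k $ j \<le> queue_bound CARD('n) V T"
proof -
  define A where "A = 3 * sqrt (2 * CARD('n) * real T)"
  define C where "C = A * V + T * (2 * V + CARD('n))"
  have A_C: "0 \<le> A" "0 \<le> C" using V_nonneg by (simp_all add: A_def C_def)
  have "\<forall>j. queue k $ j \<le> A + sqrt C"
    using assms
  proof (induction k rule: less_induct)
    case (less k)
    have "sqsum k \<le> k * (CARD('n) * (A + sqrt C + V)\<^sup>2)"
      by (rule sqsum_le) (use less in auto)
    also have "\<dots> \<le> T * (CARD('n) * (A + sqrt C + V)\<^sup>2)"
      using less.prems by (intro mult_right_mono) simp_all
    finally have "sqrt (2 * sqsum k) \<le> sqrt (2 * CARD('n) * T * (A + sqrt C + V)\<^sup>2)"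
      by (simp add: algebra_simps)
    also have "\<dots> = sqrt (2 * CARD('n) * T) * (A + sqrt C + V)"
      using A_C V_nonneg by (simp add: real_sqrt_mult)
    finally have "sqrt (2 * sqsum k) \<le> sqrt (2 * CARD('n) * T) * (A + sqrt C + V)" .
    moreover have "real k * (2 * V + CARD('n)) \<le> T * (2 * V + CARD('n))"
      using less.prems V_nonneg by (intro mult_right_mono) simp_all
    ultimately have "(norm (queue k))\<^sup>2 \<le> A * (A + sqrt C) + C"
      using queue_norm_sq_le[of k] by (simp add: A_def C_def algebra_simps)
    moreover have "(queue k $ j)\<^sup>2 \<le> (norm (queue k))\<^sup>2" for j
      using component_le_norm_cart[of "queue k" j] by (simp add: abs_le_square_iff[symmetric])
    ultimately show ?case
      using le_add_sqrt_if_sq_le[OF A_C] order_trans by blast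
  qed
  then show ?thesis by (simp add: queue_bound_def A_def C_def)
qed

lemma reward_sum_ge:
  assumes "1 \<le> a" "a \<le> b" "j \<in> P"
  shows "card {a..b} * lam j - queue b $ j \<le> (\<Sum>t\<in>{a..b}. r t $ j * bq_x r P lam V x1 t $ j)"
proof -
  obtain m where m: "a = Suc m" using assms(1) by (cases a) auto
  have telescope: "(\<Sum>k=m..<b. queue (Suc k) $ j - queue k $ j) = queue b $ j - queue m $ j"
    by (rule sum_Suc_diff') (use assms m in simp)
  have "(\<Sum>t\<in>{a..b}. r t $ j * bq_x r P lam V x1 t $ j) = (\<Sum>k=m..<b. r (Suc k) $ j * act k $ j)"
    unfolding m atLeastLessThanSuc_atLeastAtMost[symmetric] sum.shift_bounds_Suc_ivl
    by (simp add: bq_x_def act_def)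
  also have "\<dots> \<ge> (\<Sum>k=m..<b. lam j - (queue (Suc k) $ j - queue k $ j))"
    using queue_Suc_ge[OF assms(3)] by (intro sum_mono) (simp add: algebra_simps)
  moreover have "(\<Sum>k=m..<b. lam j - (queue (Suc k) $ j - queue k $ j))
      = card {a..b} * lam j - (queue b $ j - queue m $ j)"
    unfolding sum_subtractf[of "\<lambda>_. lam j"] telescope by (simp add: m)
  ultimately show ?thesis using queue_nonneg[of m j] by linarith
qed

end

lemma queue_bound_bigo:
  fixes V :: "nat \<Rightarrow> real"
  assumes N: "0 < N" and V_nonneg: "\<And>T. 0 \<le> V T" and V_bigo: "V \<in> O(\<lambda>T. sqrt (real T))"
  shows "(\<lambda>T. queue_bound N (V T) (real T)) \<in> O(\<lambda>T. real T powr (3/4))"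
proof -
  obtain c where c: "0 < c" "eventually (\<lambda>T. norm (V T) \<le> c * norm (sqrt (real T))) sequentially"
    using V_bigo by (elim landau_o.bigE) auto
  have "(\<lambda>T. queue_bound N (c * sqrt T) T) \<in> O(\<lambda>T. T powr (3/4))"
    using N c(1) unfolding queue_bound_def by real_asymp
  then have "(\<lambda>T. queue_bound N (c * sqrt (real T)) (real T)) \<in> O(\<lambda>T. real T powr (3/4))"
    by (rule landau_o.big.compose) (rule filterlim_real_sequentially)
  moreover have "(\<lambda>T. queue_bound N (V T) (real T))
      \<in> O(\<lambda>T. queue_bound N (c * sqrt (real T)) (real T))"
  proof (rule landau_o.big_mono)
    show "eventually (\<lambda>T. norm (queue_bound N (V T) (real T))
        \<le> norm (queue_bound N (c * sqrt (real T)) (real T))) sequentially"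
      using c(2)
    proof eventually_elim
      case (elim T)
      have "0 \<le> queue_bound N (V T) (real T)"
        using N V_nonneg[of T] by (simp add: queue_bound_def)
      moreover have "queue_bound N (V T) (real T) \<le> queue_bound N (c * sqrt (real T)) (real T)"
        using elim N V_nonneg[of T] unfolding queue_bound_def
        by (intro add_mono real_sqrt_le_mono mult_left_mono) auto
      ultimately show ?case by simp
    qed
  qed
  ultimately show ?thesis by (rule landau_o.big_trans[rotated])
qed

lemma Liminf_average_ge:
  fixes s E n :: "nat \<Rightarrow> real"
  assumes "eventually (\<lambda>T. 0 < n T \<and> n T * c - E T \<le> s T) sequentially"
    and "E \<in> o(n)"
  shows "ereal c \<le> Liminf sequentially (\<lambda>T. ereal (1 / n T * s T))"
proof -
  have "((\<lambda>T. c - E T / n T) \<longlongrightarrow> c) sequentially"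
    using tendsto_diff[OF tendsto_const smalloD_tendsto[OF assms(2)], of c] by simp
  then have "Liminf sequentially (\<lambda>T. ereal (c - E T / n T)) = ereal c"
    by (intro lim_imp_Liminf) auto
  moreover have "eventually (\<lambda>T. ereal (c - E T / n T) \<le> ereal (1 / n T * s T)) sequentially"
    using assms(1)
  proof eventually_elim
    case (elim T)
    then have "c - E T / n T = (n T * c - E T) / n T" by (simp add: field_simps)
    also have "\<dots> \<le> s T / n T" using elim by (intro divide_right_mono) auto
    finally show ?case by simp
  qed
  then have "Liminf sequentially (\<lambda>T. ereal (c - E T / n T))
      \<le> Liminf sequentially (\<lambda>T. ereal (1 / n T * s T))"
    by (rule Liminf_mono)
  ultimately show ?thesis by simp
qed

theorem proposition2:
  fixes r :: "nat \<Rightarrow> real^'n::finite"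
    and P :: "'n set" and lam :: "'n \<Rightarrow> real"
    and V :: "nat \<Rightarrow> real" and x1 :: "nat \<Rightarrow> real^'n"
    and a b :: "nat \<Rightarrow> nat" and i :: 'n
  assumes rewards: "\<forall>t\<ge>1. \<forall>j. 0 \<le> r t $ j \<and> r t $ j \<le> 1"
    and lam_range: "\<forall>j\<in>P. 0 \<le> lam j \<and> lam j \<le> 1"
    and lam_sum: "(\<Sum>j\<in>P. lam j) \<le> 1"
    and lam_out: "\<forall>j. j \<notin> P \<longrightarrow> lam j = 0"
    and Omega_nonempty: "\<exists>xs\<in>prob_simplex. \<forall>j\<in>P. \<forall>t\<ge>1. r t $ j * xs $ j \<ge> lam j"
    and V_nonneg: "\<forall>T. 0 \<le> V T"
    and V_Theta: "V \<in> \<Theta>(\<lambda>T. sqrt (real T))"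
    and x1_simplex: "\<forall>T. x1 T \<in> prob_simplex"
    and interval: "\<forall>T. 1 \<le> a T \<and> b T \<le> T"
    and interval_len: "(\<lambda>T. real T powr (3/4)) \<in> o(\<lambda>T. real (card {a T..b T}))"
    and iP: "i \<in> P"
  shows "Liminf sequentially
           (\<lambda>T. ereal ((1 / real (card {a T..b T})) *
              (\<Sum>t\<in>{a T..b T}. r t $ i * bq_x r P lam (V T) (x1 T) t $ i)))
         \<ge> ereal (lam i)"
proof -
  obtain u where u: "u \<in> prob_simplex" "\<And>j t. j \<in> P \<Longrightarrow> 1 \<le> t \<Longrightarrow> lam j \<le> r t $ j * u $ j"
    using Omega_nonempty by auto
  define E where "E T = queue_bound CARD('n) (V T) (real T)" for T
  have deficit: "card {a T..b T} * lam i - E T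
      \<le> (\<Sum>t\<in>{a T..b T}. r t $ i * bq_x r P lam (V T) (x1 T) t $ i)"
    if "0 < card {a T..b T}" for T
  proof -
    interpret banditq r P lam "V T" "x1 T" u
      using rewards lam_range V_nonneg x1_simplex u by unfold_locales auto
    show ?thesis
      using reward_sum_ge[of "a T" "b T" i] queue_le_bound[of "b T" T i] interval that iP
      unfolding E_def by fastforce
  qed
  have "E \<in> O(\<lambda>T. real T powr (3/4))"
    unfolding E_def using V_nonneg V_Theta by (intro queue_bound_bigo) (auto dest: bigthetaD1)
  then have E_small: "E \<in> o(\<lambda>T. real (card {a T..b T}))"
    using interval_len by (rule landau_o.big_small_trans)
  have "eventually (\<lambda>T. real T powr (3/4) \<le> real (card {a T..b T})) sequentially"
    using landau_o.smallD[OF interval_len, of 1] by simp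
  then have "eventually (\<lambda>T. 0 < real (card {a T..b T})) sequentially"
    using eventually_gt_at_top[of 0] by eventually_elim (smt (verit) powr_gt_zero of_nat_0_less_iff)
  then show ?thesis
    using deficit by (intro Liminf_average_ge[OF _ E_small]) (auto elim: eventually_mono)
qed

end
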